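(* Let $(p_i)$ be a generic sequence in $\mathbb{RP}^2$ with normalised lift $(e_i)$, $e_{i+3}=a_i(e_{i+1}+e_i)+b_ie_{i+2}$, and let $\tilde p_i=(p_i,p_{i+1})\cap(p_{i+2},p_{i+3})$ be the image sequence under the pentagram map. Then a lift of $(\tilde p_i)$ of the form $\tilde e_i=\alpha_i(e_i+e_{i+1})$ satisfies the normalisation $\tilde e_{i+3}=\tilde a_i(\tilde e_{i+1}+\tilde e_i)+\tilde b_i\tilde e_{i+2}$ if and only if $\alpha_i=c\,\frac{a_i}{b_i+1}$ for a nonzero constant $c$, and in that case $$\tilde a_i=\frac{a_{i+3}(b_{i+1}+1)}{b_{i+3}+1},\qquad \tilde b_i=\frac{b_i(b_{i+1}+1)(b_{i+2}+1)\,a_{i+3}}{(b_i+1)(b_{i+3}+1)\,a_{i+2}}.$$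
   Context: Genericity means all points and intersections involved are well defined, consecutive triples of vectors are linearly independent, and $b_i\neq-1$. $(p,q)$ denotes the line through $p$ and $q$. A lift $(e_i)$ is normalised if there are scalars $a_i,b_i$ with $e_{i+3}=a_i(e_{i+1}+e_i)+b_ie_{i+2}$ for all $i$. *)

theory Defs
  imports "HOL-Analysis.Analysis"
begin

text \<open>Points of RP^2 are represented by their lifts in real^3; a sequence is
indexed by the integers.\<close>

definition lin_indep3 :: "real^3 \<Rightarrow> real^3 \<Rightarrow> real^3 \<Rightarrow> bool" where
  "lin_indep3 x y z \<longleftrightarrow>
     (\<forall>u v w. u *\<^sub>R x + v *\<^sub>R y + w *\<^sub>R z = 0 \<longrightarrow> u = 0 \<and> v = 0 \<and> w = 0)"

definition normalised :: "(int \<Rightarrow> real^3) \<Rightarrow> (int \<Rightarrow> real) \<Rightarrow> (int \<Rightarrow> real) \<Rightarrow> bool" where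
  "normalised e a b \<longleftrightarrow>
     (\<forall>i. e (i + 3) = a i *\<^sub>R (e (i + 1) + e i) + b i *\<^sub>R e (i + 2))"

definition proj_line :: "real^3 \<Rightarrow> real^3 \<Rightarrow> (real^3) set" where
  "proj_line x y = span {x, y}"

definition lifts_pentagram_point :: "(int \<Rightarrow> real^3) \<Rightarrow> int \<Rightarrow> real^3 \<Rightarrow> bool" where
  "lifts_pentagram_point e i v \<longleftrightarrow>
     v \<noteq> 0 \<and> v \<in> proj_line (e i) (e (i + 1)) \<inter> proj_line (e (i + 2)) (e (i + 3))"

end

theory Submission
  imports Defs
begin

text \<open>Let \<open>f i = \<alpha> i *\<^sub>R (e i + e (i + 1))\<close>. Eliminating \<open>e i\<close> and \<open>e (i + 4)\<close> by the
  normalisation of \<open>e\<close>, the normalisation equation of \<open>f\<close> at \<open>i\<close> becomes a linear relation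
  between \<open>e (i + 1)\<close>, \<open>e (i + 2)\<close>, \<open>e (i + 3)\<close>, so by independence it amounts to three
  scalar relations. The first and the third force \<open>\<alpha> i * (b i + 1) / a i\<close> to be independent
  of \<open>i\<close>; conversely, for such \<open>\<alpha>\<close> the first two relations determine the new coefficients
  and the third then holds automatically.\<close>

lemma in_span_pairE:
  assumes "x \<in> span {p, q}"
  obtains k l where "x = k *\<^sub>R p + l *\<^sub>R q"
proof -
  from assms obtain k where "x - k *\<^sub>R p \<in> span {q}"
    by (auto simp: span_breakdown_eq)
  then obtain l where "x - k *\<^sub>R p = l *\<^sub>R q"
    by (auto simp: span_singleton)
  then show thesis
    by (intro that[of k l]) (simp add: algebra_simps)
qed

lemma int_shift_invariant_const:
  fixes c :: "int \<Rightarrow> 'a"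
  assumes "\<And>i. c (i + 1) = c i"
  shows "c i = c 0"
proof (induction i rule: int_induct[where k = 0])
  case (step2 i)
  then show ?case using assms[of "i - 1"] by simp
qed (use assms in simp_all)

lemma normalised_coeff_nonzero:
  assumes indep: "lin_indep3 x y z"
    and w: "w = a *\<^sub>R (y + x) + b *\<^sub>R z"
    and v: "\<alpha> *\<^sub>R (x + y) \<noteq> 0" "\<alpha> *\<^sub>R (x + y) \<in> span {z, w}"
  shows "a \<noteq> 0"
proof
  assume "a = 0"
  obtain k l where "\<alpha> *\<^sub>R (x + y) = k *\<^sub>R z + l *\<^sub>R w"
    using v(2) by (rule in_span_pairE)
  with w \<open>a = 0\<close> have "\<alpha> *\<^sub>R x + \<alpha> *\<^sub>R y + (- (k + l * b)) *\<^sub>R z = 0"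
    by (simp add: algebra_simps)
  with indep have "\<alpha> = 0"
    unfolding lin_indep3_def by blast
  with v(1) show False by simp
qed

lemma lift_recurrence_iff_coeffs:
  fixes X Y Z E0 E4 :: "'v::real_vector"
  assumes indep: "\<And>u v w. u *\<^sub>R X + v *\<^sub>R Y + w *\<^sub>R Z = 0 \<Longrightarrow> u = 0 \<and> v = 0 \<and> w = 0"
    and a0: "a0 \<noteq> 0"
    and E0: "Z = a0 *\<^sub>R (X + E0) + b0 *\<^sub>R Y"
    and E4: "E4 = a1 *\<^sub>R (Y + X) + b1 *\<^sub>R Z"
  shows "al3 *\<^sub>R (Z + E4) = t *\<^sub>R (al1 *\<^sub>R (X + Y) + al0 *\<^sub>R (E0 + X)) + s *\<^sub>R (al2 *\<^sub>R (Y + Z))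
     \<longleftrightarrow> t * al1 = al3 * a1 \<and> s * al2 = t * al0 * b0 / a0
         \<and> al3 * (b1 + 1) = t * al0 * (b0 + 1) / a0"
    (is "?L = ?R \<longleftrightarrow> ?coeffs")
proof -
  define u where "u = al3 * a1 - t * al1"
  define v where "v = u + t * al0 * b0 / a0 - s * al2"
  define w where "w = al3 * (b1 + 1) - t * al0 / a0 - s * al2"
  have E0_eq: "E0 = (1 / a0) *\<^sub>R (Z - b0 *\<^sub>R Y) - X"
    using E0 a0 by (simp add: algebra_simps)
  have "?L - ?R = u *\<^sub>R X + v *\<^sub>R Y + w *\<^sub>R Z"
    unfolding u_def v_def w_def E4 E0_eq by (simp add: algebra_simps)
  then have "?L = ?R \<longleftrightarrow> u = 0 \<and> v = 0 \<and> w = 0"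
    using indep by (metis eq_iff_diff_eq_0 scale_zero_left add_0)
  also have "\<dots> \<longleftrightarrow> ?coeffs"
    unfolding u_def v_def w_def using a0 by (auto simp: field_simps)
  finally show ?thesis .
qed

definition pentagram_lift_relations ::
    "(int \<Rightarrow> real) \<Rightarrow> (int \<Rightarrow> real) \<Rightarrow> (int \<Rightarrow> real) \<Rightarrow> (int \<Rightarrow> real) \<Rightarrow> (int \<Rightarrow> real) \<Rightarrow> int \<Rightarrow> bool"
  where "pentagram_lift_relations \<alpha> a b ta tb i \<longleftrightarrow>
    ta i * \<alpha> (i + 1) = \<alpha> (i + 3) * a (i + 1)
    \<and> tb i * \<alpha> (i + 2) = ta i * \<alpha> i * b i / a i
    \<and> \<alpha> (i + 3) * (b (i + 1) + 1) = ta i * \<alpha> i * (b i + 1) / a i"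

lemma normalised_pentagram_lift_iff:
  assumes indep: "\<forall>i. lin_indep3 (e i) (e (i + 1)) (e (i + 2))"
    and norm: "normalised e a b"
    and a: "\<And>i. a i \<noteq> 0"
  shows "normalised (\<lambda>i. \<alpha> i *\<^sub>R (e i + e (i + 1))) ta tb \<longleftrightarrow>
    (\<forall>i. pentagram_lift_relations \<alpha> a b ta tb i)"
proof -
  have rec: "e (i + 3) = a i *\<^sub>R (e (i + 1) + e i) + b i *\<^sub>R e (i + 2)" for i
    using norm unfolding normalised_def by blast
  have step: "\<alpha> (i + 3) *\<^sub>R (e (i + 3) + e (i + 4)) =
      ta i *\<^sub>R (\<alpha> (i + 1) *\<^sub>R (e (i + 1) + e (i + 2)) + \<alpha> i *\<^sub>R (e i + e (i + 1)))
      + tb i *\<^sub>R (\<alpha> (i + 2) *\<^sub>R (e (i + 2) + e (i + 3)))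
    \<longleftrightarrow> pentagram_lift_relations \<alpha> a b ta tb i" for i
    unfolding pentagram_lift_relations_def
  proof (rule lift_recurrence_iff_coeffs[OF _ a rec])
    show "u *\<^sub>R e (i + 1) + v *\<^sub>R e (i + 2) + w *\<^sub>R e (i + 3) = 0 \<Longrightarrow> u = 0 \<and> v = 0 \<and> w = 0"
      for u v w
      using indep[rule_format, of "i + 1"] unfolding lin_indep3_def by (simp add: add.assoc)
    show "e (i + 4) = a (i + 1) *\<^sub>R (e (i + 2) + e (i + 1)) + b (i + 1) *\<^sub>R e (i + 3)"
      using rec[of "i + 1"] by (simp add: add.assoc)
  qed
  show ?thesis
    unfolding normalised_def using step by (simp add: add.assoc)
qed

lemma proportional_of_pentagram_lift_relations:
  assumes rel: "\<And>i. pentagram_lift_relations \<alpha> a b ta tb i"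
    and nz: "\<And>i. \<alpha> i \<noteq> 0" "\<And>i. a i \<noteq> 0" "\<And>i. b i + 1 \<noteq> 0"
  shows "\<exists>c. c \<noteq> 0 \<and> (\<forall>i. \<alpha> i = c * a i / (b i + 1))"
proof -
  define r where "r i = \<alpha> i * (b i + 1) / a i" for i
  have "r (i + 1) = r i" for i
  proof -
    have "ta i = \<alpha> (i + 3) * a (i + 1) / \<alpha> (i + 1)"
      using rel[of i] nz unfolding pentagram_lift_relations_def by (simp add: field_simps)
    then have "\<alpha> (i + 3) * (b (i + 1) + 1) = \<alpha> (i + 3) * (a (i + 1) / \<alpha> (i + 1) * r i)"
      using rel[of i] unfolding pentagram_lift_relations_def r_def by simp
    then have "b (i + 1) + 1 = a (i + 1) / \<alpha> (i + 1) * r i"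
      using nz(1)[of "i + 3"] by (metis mult_left_cancel)
    then show ?thesis
      using nz unfolding r_def by (simp add: field_simps)
  qed
  then have "r i = r 0" for i
    by (rule int_shift_invariant_const)
  moreover have "\<alpha> i = r i * a i / (b i + 1)" for i
    using nz(2,3)[of i] by (simp add: r_def)
  moreover have "r 0 \<noteq> 0"
    using nz unfolding r_def by simp
  ultimately show ?thesis
    by metis
qed

lemma pentagram_lift_relations_iff:
  assumes c: "c \<noteq> 0" and nz: "\<And>i. a i \<noteq> 0" "\<And>i. b i + 1 \<noteq> 0"
    and \<alpha>: "\<And>i. \<alpha> i = c * a i / (b i + 1)"
  shows "pentagram_lift_relations \<alpha> a b ta tb i \<longleftrightarrow>
    ta i = a (i + 3) * (b (i + 1) + 1) / (b (i + 3) + 1)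
    \<and> tb i = b i * (b (i + 1) + 1) * (b (i + 2) + 1) * a (i + 3)
              / ((b i + 1) * (b (i + 3) + 1) * a (i + 2))"
proof -
  note nz_i = c nz(1)[of i] nz(1)[of "i + 1"] nz(1)[of "i + 2"] nz(1)[of "i + 3"]
    nz(2)[of i] nz(2)[of "i + 1"] nz(2)[of "i + 2"] nz(2)[of "i + 3"]
  define T where "T = a (i + 3) * (b (i + 1) + 1) / (b (i + 3) + 1)"
  have \<alpha>_nz: "\<alpha> (i + 1) \<noteq> 0" "\<alpha> (i + 2) \<noteq> 0"
    using nz_i unfolding \<alpha> by simp_all
  have ta_val: "\<alpha> (i + 3) * a (i + 1) / \<alpha> (i + 1) = T"
    using nz_i unfolding \<alpha> T_def by (simp add: divide_simps)
  have first: "ta i * \<alpha> (i + 1) = \<alpha> (i + 3) * a (i + 1) \<longleftrightarrow> ta i = T"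
    unfolding ta_val[symmetric] using \<alpha>_nz by (simp add: eq_divide_eq)
  have tb_val: "T * \<alpha> i * b i / a i / \<alpha> (i + 2) = b i * (b (i + 1) + 1) * (b (i + 2) + 1) * a (i + 3)
              / ((b i + 1) * (b (i + 3) + 1) * a (i + 2))"
    using nz_i unfolding \<alpha> T_def by (simp add: divide_simps)
  have second: "tb i * \<alpha> (i + 2) = T * \<alpha> i * b i / a i \<longleftrightarrow>
      tb i = b i * (b (i + 1) + 1) * (b (i + 2) + 1) * a (i + 3)
              / ((b i + 1) * (b (i + 3) + 1) * a (i + 2))"
    unfolding tb_val[symmetric] using \<alpha>_nz by (simp add: eq_divide_eq mult_ac)
  have third: "\<alpha> (i + 3) * (b (i + 1) + 1) = T * \<alpha> i * (b i + 1) / a i"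
    using nz_i unfolding \<alpha> T_def by (simp add: divide_simps)
  show ?thesis
    unfolding pentagram_lift_relations_def first T_def[symmetric]
    using second third by auto
qed

lemma normalised_pentagram_lift_proportional:
  assumes indep: "\<forall>i. lin_indep3 (e i) (e (i + 1)) (e (i + 2))"
    and norm: "normalised e a b"
    and nz: "\<And>i. \<alpha> i \<noteq> 0" "\<And>i. a i \<noteq> 0" "\<And>i. b i + 1 \<noteq> 0"
    and lift_norm: "normalised (\<lambda>i. \<alpha> i *\<^sub>R (e i + e (i + 1))) ta tb"
  shows "\<exists>c. c \<noteq> 0 \<and> (\<forall>i. \<alpha> i = c * a i / (b i + 1))"
proof (rule proportional_of_pentagram_lift_relations[OF _ nz])
  show "pentagram_lift_relations \<alpha> a b ta tb i" for i
    using lift_norm normalised_pentagram_lift_iff[OF indep norm nz(2)] by blast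
qed

lemma normalised_pentagram_lift_coeffs:
  assumes indep: "\<forall>i. lin_indep3 (e i) (e (i + 1)) (e (i + 2))"
    and norm: "normalised e a b"
    and c: "c \<noteq> 0" and nz: "\<And>i. a i \<noteq> 0" "\<And>i. b i + 1 \<noteq> 0"
    and \<alpha>: "\<And>i. \<alpha> i = c * a i / (b i + 1)"
  shows "normalised (\<lambda>i. \<alpha> i *\<^sub>R (e i + e (i + 1))) ta tb \<longleftrightarrow>
    (\<forall>i. ta i = a (i + 3) * (b (i + 1) + 1) / (b (i + 3) + 1)
      \<and> tb i = b i * (b (i + 1) + 1) * (b (i + 2) + 1) * a (i + 3)
                / ((b i + 1) * (b (i + 3) + 1) * a (i + 2)))"
  unfolding normalised_pentagram_lift_iff[OF indep norm nz(1)]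
    pentagram_lift_relations_iff[OF c nz \<alpha>] ..

theorem mainTheorem5:
  fixes e :: "int \<Rightarrow> real^3" and a b \<alpha> :: "int \<Rightarrow> real"
  assumes indep: "\<forall>i. lin_indep3 (e i) (e (i + 1)) (e (i + 2))"
    and norm: "normalised e a b"
    and bne: "\<forall>i. b i \<noteq> -1"
    and lift: "\<forall>i. lifts_pentagram_point e i (\<alpha> i *\<^sub>R (e i + e (i + 1)))"
  shows "((\<exists>ta tb. normalised (\<lambda>i. \<alpha> i *\<^sub>R (e i + e (i + 1))) ta tb)
            \<longleftrightarrow> (\<exists>c. c \<noteq> 0 \<and> (\<forall>i. \<alpha> i = c * a i / (b i + 1))))
         \<and> (\<forall>ta tb. normalised (\<lambda>i. \<alpha> i *\<^sub>R (e i + e (i + 1))) ta tb \<longrightarrow>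
              (\<forall>i. ta i = a (i + 3) * (b (i + 1) + 1) / (b (i + 3) + 1)
                 \<and> tb i = b i * (b (i + 1) + 1) * (b (i + 2) + 1) * a (i + 3)
                          / ((b i + 1) * (b (i + 3) + 1) * a (i + 2))))"
proof -
  have b1: "b i + 1 \<noteq> 0" for i
    using bne by (metis add.commute add_eq_0_iff)
  have \<alpha>: "\<alpha> i \<noteq> 0" and a: "a i \<noteq> 0" for i
  proof -
    have v: "\<alpha> i *\<^sub>R (e i + e (i + 1)) \<noteq> 0"
      "\<alpha> i *\<^sub>R (e i + e (i + 1)) \<in> span {e (i + 2), e (i + 3)}"
      using lift unfolding lifts_pentagram_point_def proj_line_def by auto
    have w: "e (i + 3) = a i *\<^sub>R (e (i + 1) + e i) + b i *\<^sub>R e (i + 2)"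
      using norm unfolding normalised_def by blast
    show "\<alpha> i \<noteq> 0"
      using v(1) by auto
    show "a i \<noteq> 0"
      using normalised_coeff_nonzero[OF indep[rule_format] w v] .
  qed
  note proportional =
    normalised_pentagram_lift_proportional[where \<alpha> = \<alpha> and a = a and b = b, OF indep norm \<alpha> a b1]
  note coeffs = normalised_pentagram_lift_coeffs[where \<alpha> = \<alpha> and a = a and b = b, OF indep norm _ a b1]
  show ?thesis
  proof (intro conjI iffI)
    assume "\<exists>c. c \<noteq> 0 \<and> (\<forall>i. \<alpha> i = c * a i / (b i + 1))"
    then obtain c where "c \<noteq> 0" "\<And>i. \<alpha> i = c * a i / (b i + 1)"
      by blast
    show "\<exists>ta tb. normalised (\<lambda>i. \<alpha> i *\<^sub>R (e i + e (i + 1))) ta tb"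
      unfolding coeffs[OF \<open>c \<noteq> 0\<close> \<open>\<And>i. \<alpha> i = c * a i / (b i + 1)\<close>]
      by (intro exI allI conjI) (rule refl)+
  qed (use proportional coeffs in blast)+
qed

end
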